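(* Let $m,n,k$ be positive integers with $(m,k-1)=1$ and $n=\mathrm{ind}_m(k)$, let $G=G(m,n,k)=\langle a,b;\ a^m=1,\ b^n=1,\ b^{-1}ab=a^k\rangle$ and let $S\subseteq\mathbb{Z}_m$ be a base. Then $\mathrm{orb}(x,S^* )$ is basic for every $x\in S^*$ if and only if $\Sigma_G(S)$ is complete. In this case $\Sigma_G(S)=\dot{\bigcup}_{x\in S^*}C(x,1)$ (a disjoint union) and $|\Sigma_G(S)|=m\,|S^*|$.
   Context: $\mathrm{ind}_m(k)$ is the least positive integer $d$ with $k^d\equiv 1\pmod m$. Elements of $G$ are written uniquely as $a^ib^j$, $i\in\mathbb{Z}_m$, $j\in\mathbb{Z}_n$; $k_t=k^t-1\pmod m$. Maps are written on the right and composed left to right. For $x,y\in\mathbb{Z}_m$, $\mu(x,y):G\to G$ is $(a^ib^j)\mu(x,y)=a^{xik^j-yk_j}$, and $C(x,y)=\{\mu(x,yz):z\in\mathbb{Z}_m\}$. For $S\subseteq\mathbb{Z}_m$, $I(S)$ is the set of elements of $S$ invertible in $\mathbb{Z}_m$ and $S^*$ is the multiplicative subsemigroup of $\mathbb{Z}_m$ generated by $S$. A base is $S\subseteq \mathbb{Z}_m$ with $0\in S$ and $I(S)\ne\varnothing$. $\Sigma_G(S)$ is the semigroup under composition generated by $\{\mu(s,z):s\in S,z\in\mathbb{Z}_m\}$. For $x\in S^*$, $Y(x)=\{s^*z: s^*\in S^*, z\in\mathbb{Z}_m, \exists s\in S,\ x\equiv ss^*\pmod m\}$, $\mathcal{F}_G(x,S)=\{C(x,y):y\in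 Y(x)\}$; this family is complete if $C(x,1)\in\mathcal{F}_G(x,S)$, and $\Sigma_G(S)$ is complete if every $x$-family ($x\in S^*$) is complete. $\mathrm{orb}(x,S^* )=\{xy:y\in I(S^* )\}$ is basic if it meets $S$. *)

theory Defs
  imports "HOL-Library.FuncSet" "HOL-Library.Disjoint_Sets" "HOL-Number_Theory.Cong"
begin

text \<open>Z_m is represented by the integers 0,...,m-1 (arithmetic reduced mod m).\<close>
definition Zm :: "nat \<Rightarrow> int set" where
  "Zm m = {0..<int m}"

text \<open>Elements a^i b^j of G(m,n,k), written uniquely as pairs (i,j), i in Z_m, j in Z_n.\<close>
definition Gcar :: "nat \<Rightarrow> nat \<Rightarrow> (int \<times> nat) set" where
  "Gcar m n = Zm m \<times> {..<n}"

definition is_ind :: "nat \<Rightarrow> nat \<Rightarrow> nat \<Rightarrow> bool" where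
  "is_ind m k d \<longleftrightarrow> 0 < d \<and> [k ^ d = 1] (mod m) \<and>
     (\<forall>e. 0 < e \<and> e < d \<longrightarrow> \<not> [k ^ e = 1] (mod m))"

definition kt :: "nat \<Rightarrow> nat \<Rightarrow> nat \<Rightarrow> int" where
  "kt m k t = (int k ^ t - 1) mod int m"

text \<open>mu(x,y): a^i b^j |-> a^(x i k^j - y k_j), as a map on the carrier of G.\<close>
definition mu :: "nat \<Rightarrow> nat \<Rightarrow> nat \<Rightarrow> int \<Rightarrow> int \<Rightarrow> (int \<times> nat \<Rightarrow> int \<times> nat)" where
  "mu m n k x y = (\<lambda>g\<in>Gcar m n. case g of (i, j) \<Rightarrow>
      ((x * i * int k ^ j - y * kt m k j) mod int m, 0))"

definition Cset :: "nat \<Rightarrow> nat \<Rightarrow> nat \<Rightarrow> int \<Rightarrow> int \<Rightarrow> (int \<times> nat \<Rightarrow> int \<times> nat) set" where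
  "Cset m n k x y = {mu m n k x ((y * z) mod int m) | z. z \<in> Zm m}"

definition Iset :: "nat \<Rightarrow> int set \<Rightarrow> int set" where
  "Iset m S = {s \<in> S. coprime s (int m)}"

inductive_set Sstar :: "nat \<Rightarrow> int set \<Rightarrow> int set" for m S where
  gen: "s \<in> S \<Longrightarrow> s \<in> Sstar m S"
| mult: "a \<in> Sstar m S \<Longrightarrow> b \<in> Sstar m S \<Longrightarrow> (a * b) mod int m \<in> Sstar m S"

definition is_base :: "nat \<Rightarrow> int set \<Rightarrow> bool" where
  "is_base m S \<longleftrightarrow> S \<subseteq> Zm m \<and> 0 \<in> S \<and> Iset m S \<noteq> {}"

text \<open>Sigma_G(S): semigroup under (left-to-right) composition generated by mu(s,z).\<close>
inductive_set SigmaG :: "nat \<Rightarrow> nat \<Rightarrow> nat \<Rightarrow> int set \<Rightarrow> (int \<times> nat \<Rightarrow> int \<times> nat) set"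
  for m n k S where
  gen: "s \<in> S \<Longrightarrow> z \<in> Zm m \<Longrightarrow> mu m n k s z \<in> SigmaG m n k S"
| comp: "f \<in> SigmaG m n k S \<Longrightarrow> g \<in> SigmaG m n k S \<Longrightarrow> compose (Gcar m n) g f \<in> SigmaG m n k S"

definition Yset :: "nat \<Rightarrow> int set \<Rightarrow> int \<Rightarrow> int set" where
  "Yset m S x = {(s' * z) mod int m | s' z. s' \<in> Sstar m S \<and> z \<in> Zm m \<and>
                   (\<exists>s\<in>S. [x = s * s'] (mod int m))}"

definition Fam :: "nat \<Rightarrow> nat \<Rightarrow> nat \<Rightarrow> int set \<Rightarrow> int \<Rightarrow> (int \<times> nat \<Rightarrow> int \<times> nat) set set" where
  "Fam m n k S x = {Cset m n k x y | y. y \<in> Yset m S x}"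

definition family_complete :: "nat \<Rightarrow> nat \<Rightarrow> nat \<Rightarrow> int set \<Rightarrow> int \<Rightarrow> bool" where
  "family_complete m n k S x \<longleftrightarrow> Cset m n k x 1 \<in> Fam m n k S x"

definition SigmaG_complete :: "nat \<Rightarrow> nat \<Rightarrow> nat \<Rightarrow> int set \<Rightarrow> bool" where
  "SigmaG_complete m n k S \<longleftrightarrow> (\<forall>x\<in>Sstar m S. family_complete m n k S x)"

definition orb :: "nat \<Rightarrow> int set \<Rightarrow> int \<Rightarrow> int set" where
  "orb m S x = {(x * y) mod int m | y. y \<in> Iset m (Sstar m S)}"

definition orb_basic :: "nat \<Rightarrow> int set \<Rightarrow> int \<Rightarrow> bool" where
  "orb_basic m S x \<longleftrightarrow> orb m S x \<inter> S \<noteq> {}"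

end

theory Submission
  imports Defs "HOL-Number_Theory.Number_Theory"
begin

text \<open>
  The maps compose by \<mu>(x,y)\<mu>(x',y') = \<mu>(xx', x'y), and \<mu>(x,y) determines x and y
  modulo m: its value at a is a^x and its value at b is a^(-y(k - 1)), where k - 1 is a unit
  because (m, k - 1) = 1. Hence every element of \<Sigma>_G(S) is a \<mu>(x,y) with x in S^*, the classes
  C(x,1) are pairwise disjoint of size m, and C(x,y) = C(x,1) exactly when y is a unit.
  Both conditions of the theorem then say the same thing about x in S^*: x = su with s in S
  and u a unit of S^*. For the orbit this uses that the units of S^* form a group (by Euler's
  theorem the inverse of u is a power of u); for the family, that \<mu>(s, vz)\<mu>(u, 0) = \<mu>(su, z)
  when uv = 1, so that C(su, 1) lies in \<Sigma>_G(S).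
\<close>

lemma mod_in_Zm: "0 < m \<Longrightarrow> x mod int m \<in> Zm m"
  by (simp add: Zm_def)

lemma Zm_mod_eq: "x \<in> Zm m \<Longrightarrow> x mod int m = x"
  by (simp add: Zm_def)

lemma euler_theorem_int:
  assumes "coprime u (int m)"
  shows "[u ^ totient m = 1] (mod int m)"
proof (cases "m \<le> 1")
  case True
  then consider "m = 0" | "m = 1" by linarith
  then show ?thesis by cases simp_all
next
  case False
  then have "residues (int m)" by (simp add: residues_def)
  then show ?thesis using residues.euler_theorem[OF _ assms] by simp
qed

lemma Sstar_subset_Zm:
  assumes "0 < m" "S \<subseteq> Zm m"
  shows "Sstar m S \<subseteq> Zm m"
proof
  fix x assume "x \<in> Sstar m S"
  then show "x \<in> Zm m" by induction (use assms in \<open>auto simp: mod_in_Zm\<close>)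
qed

lemma Sstar_power:
  assumes "u \<in> Sstar m S" "0 < j"
  shows "\<exists>v\<in>Sstar m S. [v = u ^ j] (mod int m)"
  using assms(2)
proof (induction j rule: nat_induct_non_zero)
  case 1
  show ?case using assms(1) by (intro bexI[of _ u]) simp_all
next
  case (Suc j)
  then obtain v where v: "v \<in> Sstar m S" "[v = u ^ j] (mod int m)" by blast
  have "(v * u) mod int m \<in> Sstar m S" using Sstar.mult[OF v(1) assms(1)] .
  moreover have "[(v * u) mod int m = u ^ Suc j] (mod int m)"
    using cong_scalar_right[OF v(2), of u] by (metis cong_mod_left power_Suc2)
  ultimately show ?case by blast
qed

lemma Sstar_unit_inverse:
  assumes "0 < m" "u \<in> Iset m (Sstar m S)"
  shows "\<exists>v\<in>Iset m (Sstar m S). [u * v = 1] (mod int m)"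
proof -
  have u: "u \<in> Sstar m S" "coprime u (int m)" using assms(2) by (auto simp: Iset_def)
  have "0 < totient m" using assms(1) by simp
  \<comment> \<open>u^(2 totient m - 1) inverts u; the exponent is doubled to stay positive when totient m = 1\<close>
  then have "0 < 2 * totient m - 1" by linarith
  then obtain v where v: "v \<in> Sstar m S" "[v = u ^ (2 * totient m - 1)] (mod int m)"
    using Sstar_power[OF u(1)] by blast
  have "u * u ^ (2 * totient m - 1) = (u ^ totient m) ^ 2"
  proof -
    have "Suc (2 * totient m - 1) = totient m * 2" using \<open>0 < totient m\<close> by simp
    then show ?thesis by (metis power_Suc power_mult)
  qed
  moreover have "[(u ^ totient m) ^ 2 = 1 ^ 2] (mod int m)"
    using euler_theorem_int[OF u(2)] by (rule cong_pow)
  ultimately have uv: "[u * v = 1] (mod int m)"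
    using v(2) by (metis cong_scalar_left cong_trans power_one)
  then have "coprime v (int m)" by (metis coprime_iff_invertible_int mult.commute)
  with v(1) uv show ?thesis by (auto simp: Iset_def)
qed

lemma mu_cong:
  assumes "[x = x'] (mod int m)" "[y = y'] (mod int m)"
  shows "mu m n k x y = mu m n k x' y'"
proof -
  have "[x * i * int k ^ j - y * kt m k j = x' * i * int k ^ j - y' * kt m k j] (mod int m)"
    for i :: int and j :: nat
    using assms by (intro cong_diff cong_mult cong_refl)
  then show ?thesis by (auto simp: mu_def cong_def intro!: restrict_ext)
qed

lemma compose_mu:
  assumes "0 < n"
  shows "compose (Gcar m n) (mu m n k x' y') (mu m n k x y) = mu m n k (x * x') (x' * y)"
proof
  fix g
  show "compose (Gcar m n) (mu m n k x' y') (mu m n k x y) g = mu m n k (x * x') (x' * y) g"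
  proof (cases "g \<in> Gcar m n")
    case False
    then show ?thesis by (simp add: compose_def mu_def)
  next
    case True
    then obtain i j where g: "g = (i, j)" and "0 < m" by (cases g) (auto simp: Gcar_def Zm_def)
    let ?c = "(x * i * int k ^ j - y * kt m k j) mod int m"
    have "(?c, 0) \<in> Gcar m n" using \<open>0 < m\<close> assms by (simp add: Gcar_def Zm_def)
    moreover have "(x' * ?c) mod int m = (x * x' * i * int k ^ j - x' * y * kt m k j) mod int m"
      by (simp add: mod_mult_right_eq algebra_simps)
    ultimately show ?thesis
      using True by (simp add: compose_def mu_def g kt_def algebra_simps)
  qed
qed

lemma Cset_eq_range:
  assumes "0 < m"
  shows "Cset m n k x y = range (\<lambda>z. mu m n k x (y * z))"
proof -
  have "mu m n k x ((y * z) mod int m) = mu m n k x (y * z)" for z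
    by (rule mu_cong) (simp_all add: cong_def)
  moreover have "mu m n k x (y * z) = mu m n k x ((y * (z mod int m)) mod int m)" for z
    by (rule mu_cong) (simp_all add: cong_def mod_mult_right_eq)
  ultimately show ?thesis
    using mod_in_Zm[OF assms] unfolding Cset_def by auto
qed

lemma Cset_unit_eq:
  assumes "0 < m" "coprime y (int m)"
  shows "Cset m n k x y = Cset m n k x 1"
proof -
  obtain v where v: "[y * v = 1] (mod int m)" using cong_solve_coprime_int assms(2) by blast
  have "mu m n k x z = mu m n k x (y * (v * z))" for z
    using cong_scalar_right[OF v, of z] by (intro mu_cong) (simp_all add: cong_sym mult.assoc)
  then show ?thesis unfolding Cset_eq_range[OF assms(1)] by auto
qed

definition unit_multiple :: "nat \<Rightarrow> int set \<Rightarrow> int \<Rightarrow> bool" where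
  "unit_multiple m S x \<longleftrightarrow> (\<exists>s\<in>S. \<exists>u\<in>Iset m (Sstar m S). [x = s * u] (mod int m))"

lemma orb_basic_iff_unit_multiple:
  assumes "0 < m" "S \<subseteq> Zm m"
  shows "orb_basic m S x \<longleftrightarrow> unit_multiple m S x"
proof
  assume "orb_basic m S x"
  then obtain u where u: "u \<in> Iset m (Sstar m S)" "(x * u) mod int m \<in> S"
    unfolding orb_basic_def orb_def by blast
  obtain v where v: "v \<in> Iset m (Sstar m S)" "[u * v = 1] (mod int m)"
    using Sstar_unit_inverse[OF assms(1) u(1)] by blast
  have "[(x * u) mod int m * v = x * (u * v)] (mod int m)"
    by (simp add: cong_def mod_mult_left_eq mult.assoc)
  also have "[x * (u * v) = x] (mod int m)"
    using cong_scalar_left[OF v(2), of x] by simp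
  finally show "unit_multiple m S x"
    unfolding unit_multiple_def using u(2) v(1) cong_sym by blast
next
  assume "unit_multiple m S x"
  then obtain s u where su: "s \<in> S" "u \<in> Iset m (Sstar m S)" "[x = s * u] (mod int m)"
    unfolding unit_multiple_def by blast
  obtain v where v: "v \<in> Iset m (Sstar m S)" "[u * v = 1] (mod int m)"
    using Sstar_unit_inverse[OF assms(1) su(2)] by blast
  have "[x * v = s * (u * v)] (mod int m)"
    using cong_scalar_right[OF su(3), of v] by (simp add: mult.assoc)
  also have "[s * (u * v) = s] (mod int m)"
    using cong_scalar_left[OF v(2), of s] by simp
  finally have "(x * v) mod int m = s"
    using su(1) assms(2) by (auto simp: cong_def Zm_mod_eq)
  then show "orb_basic m S x"
    unfolding orb_basic_def orb_def using su(1) v(1) by blast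
qed

lemma SigmaG_mem_imp_mu:
  assumes "0 < n" "f \<in> SigmaG m n k S"
  shows "\<exists>x\<in>Sstar m S. \<exists>y. f = mu m n k x y"
  using assms(2)
proof induction
  case (gen s z)
  then show ?case using Sstar.gen by blast
next
  case (comp f g)
  then obtain x y x' y' where "x \<in> Sstar m S" "x' \<in> Sstar m S" "f = mu m n k x y" "g = mu m n k x' y'"
    by blast
  moreover have "mu m n k (x * x') (x' * y) = mu m n k ((x * x') mod int m) (x' * y)"
    by (rule mu_cong) (simp_all add: cong_def)
  ultimately show ?case using compose_mu[OF assms(1)] Sstar.mult by metis
qed

lemma SigmaG_subset_Union_Cset:
  assumes "0 < m" "0 < n"
  shows "SigmaG m n k S \<subseteq> (\<Union>x\<in>Sstar m S. Cset m n k x 1)"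
  using SigmaG_mem_imp_mu[OF assms(2)] by (fastforce simp: Cset_eq_range[OF assms(1)])

lemma mu_zero_in_SigmaG:
  assumes "0 < m" "0 < n" "u \<in> Sstar m S"
  shows "mu m n k u 0 \<in> SigmaG m n k S"
  using assms(3)
proof induction
  case (gen s)
  show ?case using SigmaG.gen[OF gen, of 0] assms(1) by (simp add: Zm_def)
next
  case (mult u u')
  have "compose (Gcar m n) (mu m n k u' 0) (mu m n k u 0) = mu m n k (u * u') (u' * 0)"
    by (rule compose_mu[OF assms(2)])
  also have "\<dots> = mu m n k ((u * u') mod int m) 0"
    by (rule mu_cong) (simp_all add: cong_def)
  finally show ?case using SigmaG.comp[OF mult.IH] by simp
qed

lemma Cset_subset_SigmaG:
  assumes "0 < m" "0 < n" "unit_multiple m S x"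
  shows "Cset m n k x 1 \<subseteq> SigmaG m n k S"
proof
  fix f assume "f \<in> Cset m n k x 1"
  then obtain z where f: "f = mu m n k x z"
    unfolding Cset_eq_range[OF assms(1)] by auto
  obtain s u where su: "s \<in> S" "u \<in> Iset m (Sstar m S)" "[x = s * u] (mod int m)"
    using assms(3) unfolding unit_multiple_def by blast
  obtain v where v: "[u * v = 1] (mod int m)"
    using cong_solve_coprime_int su(2) by (auto simp: Iset_def)
  let ?g = "compose (Gcar m n) (mu m n k u 0) (mu m n k s ((v * z) mod int m))"
  have "?g \<in> SigmaG m n k S"
    using su mod_in_Zm[OF assms(1)] by (intro SigmaG.comp SigmaG.gen mu_zero_in_SigmaG assms)
      (auto simp: Iset_def)
  moreover have "?g = mu m n k (s * u) (u * ((v * z) mod int m))"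
    by (rule compose_mu[OF assms(2)])
  moreover have "[u * ((v * z) mod int m) = z] (mod int m)"
    using cong_scalar_right[OF v, of z] by (simp add: cong_def mod_mult_right_eq mult.assoc)
  then have "mu m n k (s * u) (u * ((v * z) mod int m)) = f"
    unfolding f using su(3) by (intro mu_cong) (simp_all add: cong_sym)
  ultimately show "f \<in> SigmaG m n k S" by simp
qed

locale metacyclic =
  fixes m n k :: nat
  assumes m_pos: "0 < m" and k_pos: "0 < k"
    and coprime_k_minus_1: "coprime m (k - 1)"
    and ind: "is_ind m k n"
begin

lemma n_pos: "0 < n"
  using ind by (simp add: is_ind_def)

lemma n_gt_1: "1 < m \<Longrightarrow> 1 < n"
proof (rule ccontr)
  assume "1 < m" "\<not> 1 < n"
  then have "n = 1" using n_pos by simp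
  then have "[k = 1] (mod m)" using ind by (simp add: is_ind_def)
  then have "m dvd k - 1" by (rule cong_to_1_nat)
  then have "m = 1" using coprime_k_minus_1 by (metis coprime_common_divisor_nat dvd_refl)
  with \<open>1 < m\<close> show False by simp
qed

lemma mu_eq_iff:
  "mu m n k x y = mu m n k x' y' \<longleftrightarrow> [x = x'] (mod int m) \<and> [y = y'] (mod int m)"
proof
  assume eq: "mu m n k x y = mu m n k x' y'"
  show "[x = x'] (mod int m) \<and> [y = y'] (mod int m)"
  proof (cases "m = 1")
    case False
    then have "1 < m" "1 < n" using m_pos n_gt_1 by simp_all
    have at_a: "mu m n k x y (1, 0) = (x mod int m, 0)" for x y
      using \<open>1 < m\<close> n_pos by (simp add: mu_def Gcar_def Zm_def kt_def)
    have at_b: "mu m n k x y (0, 1) = (- (y * kt m k 1) mod int m, 0)" for x y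
      using \<open>1 < m\<close> \<open>1 < n\<close> by (simp add: mu_def Gcar_def Zm_def)
    have "[x = x'] (mod int m)"
      using at_a[of x y] at_a[of x' y'] eq by (simp add: cong_def)
    moreover have "[- (y * kt m k 1) = - (y' * kt m k 1)] (mod int m)"
      using at_b[of x y] at_b[of x' y'] eq by (simp add: cong_def)
    then have "[y * kt m k 1 = y' * kt m k 1] (mod int m)"
      by (rule iffD1[OF cong_minus_minus_iff])
    moreover have "coprime (int k - 1) (int m)"
      using coprime_k_minus_1 k_pos by (simp add: coprime_commute of_nat_diff flip: coprime_int_iff)
    then have "coprime (kt m k 1) (int m)"
      using m_pos by (simp add: kt_def coprime_mod_left_iff)
    ultimately show ?thesis by (simp add: cong_mult_rcancel)
  qed (simp add: cong_def)
qed (simp add: mu_cong)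

lemma Cset_eq_one_imp_coprime:
  assumes "Cset m n k x y = Cset m n k x 1"
  shows "coprime y (int m)"
proof -
  have "mu m n k x 1 \<in> Cset m n k x 1"
    unfolding Cset_eq_range[OF m_pos] by (rule range_eqI) simp
  then have "mu m n k x 1 \<in> Cset m n k x y" using assms by simp
  then obtain z where "mu m n k x 1 = mu m n k x (y * z)"
    unfolding Cset_eq_range[OF m_pos] by blast
  then have "[y * z = 1] (mod int m)" by (simp add: mu_eq_iff cong_sym)
  then show ?thesis using coprime_iff_invertible_int by blast
qed

lemma card_Cset: "card (Cset m n k x 1) = m"
proof -
  have "Cset m n k x 1 = mu m n k x ` Zm m"
    unfolding Cset_def image_def by (auto simp: Zm_mod_eq) (metis Zm_mod_eq)
  moreover have "inj_on (mu m n k x) (Zm m)"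
    by (rule inj_onI) (auto simp: mu_eq_iff cong_def Zm_mod_eq)
  ultimately show ?thesis by (simp add: card_image Zm_def)
qed

lemma disjoint_family_Cset:
  assumes "A \<subseteq> Zm m"
  shows "disjoint_family_on (\<lambda>x. Cset m n k x 1) A"
  unfolding disjoint_family_on_def
proof (intro ballI impI)
  fix x x' assume "x \<in> A" "x' \<in> A" "x \<noteq> x'"
  then have "\<not> [x = x'] (mod int m)"
    using assms by (auto simp: cong_def Zm_mod_eq subset_iff)
  then show "Cset m n k x 1 \<inter> Cset m n k x' 1 = {}"
    by (auto simp: Cset_eq_range[OF m_pos] mu_eq_iff)
qed

lemma card_Union_Cset:
  assumes "A \<subseteq> Zm m"
  shows "card (\<Union>x\<in>A. Cset m n k x 1) = m * card A"
proof -
  have "finite A" using assms finite_subset by (auto simp: Zm_def)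
  moreover have "finite (Cset m n k x 1)" for x
    using card_Cset m_pos by (metis card_eq_0_iff less_irrefl)
  ultimately have "card (\<Union>x\<in>A. Cset m n k x 1) = (\<Sum>x\<in>A. card (Cset m n k x 1))"
    using disjoint_family_Cset[OF assms] by (intro card_UN_disjoint) (auto simp: disjoint_family_on_def)
  then show ?thesis by (simp add: card_Cset)
qed

lemma family_complete_iff_unit_multiple:
  "family_complete m n k S x \<longleftrightarrow> unit_multiple m S x"
proof
  assume "family_complete m n k S x"
  then obtain y where y: "y \<in> Yset m S x" "Cset m n k x y = Cset m n k x 1"
    unfolding family_complete_def Fam_def by auto
  from y(1) obtain s u z where
    "y = (u * z) mod int m" "u \<in> Sstar m S" "s \<in> S" "[x = s * u] (mod int m)"
    unfolding Yset_def by blast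
  moreover have "coprime y (int m)" using Cset_eq_one_imp_coprime[OF y(2)] .
  ultimately show "unit_multiple m S x"
    using m_pos unfolding unit_multiple_def Iset_def by (auto simp: coprime_mod_left_iff)
next
  assume "unit_multiple m S x"
  then obtain s u where "s \<in> S" and su: "u \<in> Iset m (Sstar m S)" "[x = s * u] (mod int m)"
    unfolding unit_multiple_def by blast
  \<comment> \<open>the witness z = 1 mod m, not 1, since 1 is not in Z_1\<close>
  let ?y = "(u * (1 mod int m)) mod int m"
  have "?y \<in> Yset m S x"
    unfolding Yset_def using mod_in_Zm[OF m_pos] \<open>s \<in> S\<close> su by (auto simp: Iset_def)
  moreover have "Cset m n k x ?y = Cset m n k x 1"
    using su(1) m_pos by (intro Cset_unit_eq) (auto simp: Iset_def)
  ultimately show "family_complete m n k S x"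
    unfolding family_complete_def Fam_def by (metis (mono_tags, lifting) mem_Collect_eq)
qed

end

theorem theorem4p11:
  fixes m n k :: nat and S :: "int set"
  assumes "0 < m" "0 < n" "0 < k"
    and "coprime m (k - 1)"
    and "is_ind m k n"
    and "is_base m S"
  shows "((\<forall>x\<in>Sstar m S. orb_basic m S x) \<longleftrightarrow> SigmaG_complete m n k S)
    \<and> (SigmaG_complete m n k S \<longrightarrow>
         SigmaG m n k S = (\<Union>x\<in>Sstar m S. Cset m n k x 1)
       \<and> disjoint_family_on (\<lambda>x. Cset m n k x 1) (Sstar m S)
       \<and> card (SigmaG m n k S) = m * card (Sstar m S))"
proof -
  interpret metacyclic m n k using assms(1,3-5) by unfold_locales
  have "S \<subseteq> Zm m" using assms(6) by (simp add: is_base_def)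
  then have Sstar_Zm: "Sstar m S \<subseteq> Zm m" using Sstar_subset_Zm assms(1) by blast
  have basic_iff: "orb_basic m S x \<longleftrightarrow> family_complete m n k S x" for x
    using orb_basic_iff_unit_multiple[OF assms(1) \<open>S \<subseteq> Zm m\<close>] family_complete_iff_unit_multiple
    by simp
  have "SigmaG m n k S = (\<Union>x\<in>Sstar m S. Cset m n k x 1)" if "SigmaG_complete m n k S"
  proof
    show "SigmaG m n k S \<subseteq> (\<Union>x\<in>Sstar m S. Cset m n k x 1)"
      using SigmaG_subset_Union_Cset assms(1,2) .
    show "(\<Union>x\<in>Sstar m S. Cset m n k x 1) \<subseteq> SigmaG m n k S"
      using that Cset_subset_SigmaG[OF assms(1,2), where S = S and k = k]
      by (auto simp: SigmaG_complete_def family_complete_iff_unit_multiple)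
  qed
  then show ?thesis
    using basic_iff disjoint_family_Cset[OF Sstar_Zm] card_Union_Cset[OF Sstar_Zm]
    by (simp add: SigmaG_complete_def)
qed

end
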